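(* For every integer $n\ge 0$, $$\int_0^1 Q_n(u;0,1)\,du=2^n B_n\!\left(\tfrac12\right),$$ where $Q_n(u;0,1)=\sum_{k=1}^{n+1}M_{n+1,k}\,u^{n+1-k}(u-1)^{k-1}$.
   Context: The MacMahon numbers $M_{n,k}$ ($n\ge1$, $1\le k\le n$) are defined by $M_{n,1}=1$ for all $n\ge1$ and, for $n\ge 2$, $2\le k\le n$, $M_{n,k}=(2k-1)M_{n-1,k}+(2n-2k+1)M_{n-1,k-1}$, with the convention $M_{n-1,n}=0$. For $a,b\in\mathbb{C}$ the derivative polynomial is $Q_n(u;a,b)=\sum_{k=1}^{n+1}M_{n+1,k}(u-a)^{n+1-k}(u-b)^{k-1}$. The Bernoulli polynomials $B_n(w)$ are defined by $\sum_{n\ge0}B_n(w)\frac{t^n}{n!}=\frac{t e^{wt}}{e^t-1}$. *)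

theory Defs
  imports "HOL-Analysis.Analysis" "HOL-Computational_Algebra.Formal_Power_Series"
begin

text \<open>MacMahon numbers M n k (n \<ge> 1, 1 \<le> k \<le> n); value 0 outside that range
  (in particular M (n-1) n = 0, as in the stated convention).\<close>
fun macmahon :: "nat \<Rightarrow> nat \<Rightarrow> nat" where
  "macmahon 0 k = 0"
| "macmahon (Suc 0) k = (if k = 1 then 1 else 0)"
| "macmahon (Suc (Suc m)) k =
     (if k = 1 then 1
      else if 2 \<le> k \<and> k \<le> Suc (Suc m) then
        (2*k - 1) * macmahon (Suc m) k + (2*(Suc (Suc m)) - 2*k + 1) * macmahon (Suc m) (k - 1)
      else 0)"

definition Qpoly :: "nat \<Rightarrow> real \<Rightarrow> real \<Rightarrow> real \<Rightarrow> real" where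
  "Qpoly n u a b = (\<Sum>k=1..n+1. real (macmahon (n+1) k) * (u - a) ^ (n + 1 - k) * (u - b) ^ (k - 1))"

definition bernoulli_poly :: "nat \<Rightarrow> real \<Rightarrow> real" where
  "bernoulli_poly n w = fact n * fps_nth ((fps_X * fps_exp w) / (fps_exp 1 - 1)) n"

end

theory Submission
  imports Defs
begin

text \<open>
  The MacMahon recursion gives Q_{n+1} = (2u - a - b) Q_n + 2 (u - a)(u - b) Q_n'.
  For a = 0, b = 1 the polynomials sum_m c(n,m) u^m with c(n,m) = n! [t^n] e^{-t} Y(t)^m,
  Y(t) = 1 - e^{-2t}, satisfy the same recursion (differentiate in t and use Y' = 2 (1 - Y))
  with the same start, so they are Q_n(u;0,1). Integrating termwise, the integral equals
  n! [t^n] e^{-t} L(Y(t)) with L(x) = sum_m x^m/(m+1) = -log(1 - x)/x. Since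
  -log(1 - Y(t)) = 2t, this series is 2t e^t/(e^{2t} - 1), the Bernoulli generating function
  t e^{t/2}/(e^t - 1) evaluated at 2t.
\<close>

lemma macmahon_0_right [simp]: "macmahon n 0 = 0"
  by (induction n "0::nat" rule: macmahon.induct) auto

lemma macmahon_Suc_1 [simp]: "macmahon (Suc n) (Suc 0) = 1"
  by (cases n) auto

lemma macmahon_eq_0_if_gt: "n < k \<Longrightarrow> macmahon n k = 0"
  by (induction n k rule: macmahon.induct) auto

lemma macmahon_Suc_Suc:
  assumes "j \<le> Suc n"
  shows "macmahon (Suc (Suc n)) (Suc j) =
    (2 * j + 1) * macmahon (Suc n) (Suc j) + (2 * (Suc n - j) + 1) * macmahon (Suc n) j"
proof (cases j)
  case (Suc i)
  have "2 * Suc j - 1 = 2 * j + 1" "2 * Suc (Suc n) - 2 * Suc j + 1 = 2 * (Suc n - j) + 1"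
    using assms by simp_all
  with Suc assms show ?thesis by (simp only: macmahon.simps) simp
qed simp

lemma mult_of_nat_power_pred: "(x::'a::comm_semiring_1) * (of_nat p * x ^ (p - 1)) = of_nat p * x ^ p"
  by (cases p) (simp_all add: algebra_simps)

lemma power_pair_recurrence:
  fixes p q :: real
  shows "(p + q) * (p^i * q^j) + 2*p*q * (real i * p^(i-1) * q^j + real j * p^i * q^(j-1))
         = (2*j+1) * p^Suc i * q^j + (2*i+1) * p^i * q^Suc j"
proof -
  have "2*p*q * (real i * p^(i-1) * q^j + real j * p^i * q^(j-1))
      = 2 * (p * (real i * p^(i-1))) * q^Suc j + 2 * (q * (real j * q^(j-1))) * p^Suc i"
    by (simp add: algebra_simps)
  also have "\<dots> = 2 * real i * p^i * q^Suc j + 2 * real j * q^j * p^Suc i"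
    by (simp only: mult_of_nat_power_pred mult.assoc)
  finally show ?thesis by (simp add: algebra_simps)
qed

lemma Qpoly_eq_sum_atMost:
  "Qpoly n u a b = (\<Sum>j\<le>n. real (macmahon (n+1) (j+1)) * (u-a)^(n-j) * (u-b)^j)"
proof -
  have "Qpoly n u a b = (\<Sum>k=Suc 0..Suc n. real (macmahon (n+1) k) * (u-a)^(n+1-k) * (u-b)^(k-1))"
    unfolding Qpoly_def by simp
  also have "\<dots> = (\<Sum>j=0..n. real (macmahon (n+1) (j+1)) * (u-a)^(n-j) * (u-b)^j)"
    by (subst sum.shift_bounds_cl_Suc_ivl) simp
  finally show ?thesis by (simp add: atMost_atLeast0)
qed

definition Qpoly_deriv :: "nat \<Rightarrow> real \<Rightarrow> real \<Rightarrow> real \<Rightarrow> real" where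
  "Qpoly_deriv n u a b = (\<Sum>j\<le>n. real (macmahon (n+1) (j+1)) *
     (real (n-j) * (u-a)^(n-j-1) * (u-b)^j + real j * (u-a)^(n-j) * (u-b)^(j-1)))"

lemma Qpoly_has_real_derivative:
  "((\<lambda>v. Qpoly n v a b) has_real_derivative Qpoly_deriv n u a b) (at u)"
  unfolding Qpoly_eq_sum_atMost Qpoly_deriv_def
  by (auto intro!: derivative_eq_intros sum.cong simp: algebra_simps)

lemma Qpoly_Suc:
  "Qpoly (Suc n) u a b = (2*u - a - b) * Qpoly n u a b + 2*(u-a)*(u-b) * Qpoly_deriv n u a b"
proof -
  let ?M = "\<lambda>j. real (macmahon (n+1) (j+1))"
  have "Qpoly (Suc n) u a b
      = (\<Sum>j\<le>Suc n. (2*j+1) * real (macmahon (Suc n) (Suc j)) * (u-a)^(Suc n-j) * (u-b)^j)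
      + (\<Sum>j\<le>Suc n. (2*(Suc n-j)+1) * real (macmahon (Suc n) j) * (u-a)^(Suc n-j) * (u-b)^j)"
    unfolding Qpoly_eq_sum_atMost sum.distrib[symmetric]
    by (intro sum.cong refl)
      (simp only: Suc_eq_plus1[symmetric] macmahon_Suc_Suc atMost_iff of_nat_add of_nat_mult
        of_nat_1 of_nat_numeral distrib_right mult.assoc)
  also have "(\<Sum>j\<le>Suc n. (2*j+1) * real (macmahon (Suc n) (Suc j)) * (u-a)^(Suc n-j) * (u-b)^j)
      = (\<Sum>j\<le>n. (2*j+1) * ?M j * (u-a)^Suc (n-j) * (u-b)^j)"
    by (simp add: macmahon_eq_0_if_gt Suc_diff_le)
  also have "(\<Sum>j\<le>Suc n. (2*(Suc n-j)+1) * real (macmahon (Suc n) j) * (u-a)^(Suc n-j) * (u-b)^j)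
      = (\<Sum>j\<le>n. (2*(n-j)+1) * ?M j * (u-a)^(n-j) * (u-b)^Suc j)"
    by (subst sum.atMost_Suc_shift) simp
  also have "(\<Sum>j\<le>n. (2*j+1) * ?M j * (u-a)^Suc (n-j) * (u-b)^j)
      + (\<Sum>j\<le>n. (2*(n-j)+1) * ?M j * (u-a)^(n-j) * (u-b)^Suc j)
      = (\<Sum>j\<le>n. ?M j * (((u-a) + (u-b)) * ((u-a)^(n-j) * (u-b)^j) + 2*(u-a)*(u-b) *
      (real (n-j) * (u-a)^(n-j-1) * (u-b)^j + real j * (u-a)^(n-j) * (u-b)^(j-1))))"
    unfolding power_pair_recurrence sum.distrib[symmetric] by (simp add: algebra_simps)
  also have "\<dots> = (2*u - a - b) * Qpoly n u a b + 2*(u-a)*(u-b) * Qpoly_deriv n u a b"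
    unfolding Qpoly_eq_sum_atMost Qpoly_deriv_def sum_distrib_left sum.distrib[symmetric]
    by (intro sum.cong refl) (simp add: algebra_simps)
  finally show ?thesis .
qed

lemma recurrence_with_derivative_unique:
  fixes f g :: "nat \<Rightarrow> real \<Rightarrow> real"
  assumes f_deriv: "\<And>n u. (f n has_real_derivative f' n u) (at u)"
    and g_deriv: "\<And>n u. (g n has_real_derivative g' n u) (at u)"
    and f_Suc: "\<And>n u. f (Suc n) u = R u (f n u) (f' n u)"
    and g_Suc: "\<And>n u. g (Suc n) u = R u (g n u) (g' n u)"
    and "f 0 = g 0"
  shows "f n = g n"
proof (induction n)
  case (Suc n)
  have "f' n u = g' n u" for u
    using f_deriv[of n u] g_deriv[of n u] unfolding Suc by (rule DERIV_unique)
  with Suc show ?case by (simp add: fun_eq_iff f_Suc g_Suc)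
qed (fact assms)

definition fps_Y :: "real fps" where "fps_Y = 1 - fps_exp (-2)"

definition Qcoeff_egf :: "nat \<Rightarrow> real fps" where "Qcoeff_egf m = fps_exp (-1) * fps_Y ^ m"

definition Qcoeff :: "nat \<Rightarrow> nat \<Rightarrow> real" where
  "Qcoeff n m = fact n * fps_nth (Qcoeff_egf m) n"

lemma fps_Y_nth_0 [simp]: "fps_nth fps_Y 0 = 0"
  by (simp add: fps_Y_def)

lemma fps_deriv_fps_Y: "fps_deriv fps_Y = 2 * (1 - fps_Y)"
  by (rule fps_ext) (simp add: fps_Y_def fps_numeral_nth)

lemma fps_deriv_Qcoeff_egf:
  "fps_deriv (Qcoeff_egf m) = 2 * of_nat m * Qcoeff_egf (m - 1) - (2 * of_nat m + 1) * Qcoeff_egf m"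
proof (cases m)
  case (Suc k)
  then show ?thesis
    by (simp add: Qcoeff_egf_def fps_deriv_power' fps_deriv_fps_Y del: power_Suc)
      (simp add: fps_const_neg[symmetric] algebra_simps)
qed (simp add: Qcoeff_egf_def fps_const_neg[symmetric])

lemma Qcoeff_eq_0_if_gt:
  assumes "n < m"
  shows "Qcoeff n m = 0"
proof -
  have "fps_nth (fps_Y ^ m) k = 0" if "k \<le> n" for k
    using startsby_zero_power_prefix[OF fps_Y_nth_0] that assms by simp
  then show ?thesis
    by (simp add: Qcoeff_def Qcoeff_egf_def fps_mult_nth)
qed

lemma Qcoeff_Suc: "Qcoeff (Suc n) m = 2 * real m * Qcoeff n (m - 1) - (2 * real m + 1) * Qcoeff n m"
proof -
  have "Qcoeff (Suc n) m = fact n * fps_nth (fps_deriv (Qcoeff_egf m)) n"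
    by (simp add: Qcoeff_def algebra_simps)
  then show ?thesis
    by (simp add: fps_deriv_Qcoeff_egf Qcoeff_def numeral_fps_const fps_of_nat algebra_simps)
qed

lemma sum_Qcoeff_Suc:
  "(\<Sum>m\<le>Suc n. Qcoeff (Suc n) m * u^m)
     = (2*u - 1) * (\<Sum>m\<le>n. Qcoeff n m * u^m)
       + 2*u*(u - 1) * (\<Sum>m\<le>n. Qcoeff n m * (real m * u^(m-1)))"
proof -
  have "(\<Sum>m\<le>Suc n. Qcoeff (Suc n) m * u^m)
      = (\<Sum>m\<le>Suc n. 2 * real m * Qcoeff n (m - 1) * u^m)
      - (\<Sum>m\<le>Suc n. (2 * real m + 1) * Qcoeff n m * u^m)"
    unfolding Qcoeff_Suc sum_subtractf[symmetric] by (simp add: algebra_simps)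
  also have "(\<Sum>m\<le>Suc n. 2 * real m * Qcoeff n (m - 1) * u^m)
      = (\<Sum>m\<le>n. 2 * real (Suc m) * Qcoeff n m * u^Suc m)"
    by (subst sum.atMost_Suc_shift) simp
  also have "(\<Sum>m\<le>Suc n. (2 * real m + 1) * Qcoeff n m * u^m)
      = (\<Sum>m\<le>n. (2 * real m + 1) * Qcoeff n m * u^m)"
    by (simp add: Qcoeff_eq_0_if_gt)
  also have "(\<Sum>m\<le>n. 2 * real (Suc m) * Qcoeff n m * u^Suc m)
      - (\<Sum>m\<le>n. (2 * real m + 1) * Qcoeff n m * u^m)
      = (\<Sum>m\<le>n. Qcoeff n m * ((2*u - 1) * u^m + 2*u*(u - 1) * (real m * u^(m-1))))"
    unfolding sum_subtractf[symmetric] by (intro sum.cong refl) (simp add: power_eq_if algebra_simps)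
  also have "\<dots> = (2*u - 1) * (\<Sum>m\<le>n. Qcoeff n m * u^m)
      + 2*u*(u - 1) * (\<Sum>m\<le>n. Qcoeff n m * (real m * u^(m-1)))"
    unfolding sum_distrib_left sum.distrib[symmetric] by (intro sum.cong refl) (simp add: algebra_simps)
  finally show ?thesis .
qed

lemma Qpoly_0_1_eq_sum_Qcoeff: "Qpoly n u 0 1 = (\<Sum>m\<le>n. Qcoeff n m * u^m)"
proof -
  have "(\<lambda>u. Qpoly n u 0 1) = (\<lambda>u. \<Sum>m\<le>n. Qcoeff n m * u^m)"
  proof (rule recurrence_with_derivative_unique[where f' = "\<lambda>n u. Qpoly_deriv n u 0 1"
      and g' = "\<lambda>n u. \<Sum>m\<le>n. Qcoeff n m * (real m * u^(m-1))"
      and R = "\<lambda>u y y'. (2*u - 1) * y + 2*u*(u - 1) * y'"])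
    show "((\<lambda>u. \<Sum>m\<le>n. Qcoeff n m * u^m) has_real_derivative
        (\<Sum>m\<le>n. Qcoeff n m * (real m * u^(m-1)))) (at u)"
      for n u by (auto intro!: derivative_eq_intros sum.cong simp: algebra_simps)
    show "(\<lambda>u. Qpoly 0 u 0 1) = (\<lambda>u. \<Sum>m\<le>0. Qcoeff 0 m * u^m)"
      by (simp add: Qpoly_def Qcoeff_def Qcoeff_egf_def)
    show "Qpoly (Suc n) u 0 1 = (2*u - 1) * Qpoly n u 0 1 + 2*u*(u - 1) * Qpoly_deriv n u 0 1" for n u
      by (simp add: Qpoly_Suc)
  qed (fact Qpoly_has_real_derivative sum_Qcoeff_Suc)+
  then show ?thesis by (rule fun_cong)
qed

lemma has_integral_power_0_1: "((\<lambda>u::real. u ^ m) has_integral 1 / (real m + 1)) {0..1}"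
proof -
  have "((\<lambda>u. u ^ Suc m / (real m + 1)) has_real_derivative u ^ m) (at u)" for u :: real
    using DERIV_cdivide[OF DERIV_pow[of "Suc m" u], of "real m + 1"] by (simp add: add.commute)
  then have "((\<lambda>u. u ^ Suc m / (real m + 1)) has_vector_derivative u ^ m) (at u within {0..1})"
    for u :: real
    by (simp add: has_real_derivative_iff_has_vector_derivative[symmetric] has_field_derivative_at_within)
  from fundamental_theorem_of_calculus[OF _ this] show ?thesis by simp
qed

lemma integral_0_1_polynomial:
  assumes "finite A"
  shows "integral {0..1} (\<lambda>u::real. \<Sum>m\<in>A. c m * u ^ m) = (\<Sum>m\<in>A. c m / (real m + 1))"
  using has_integral_sum[OF assms has_integral_mult_right[OF has_integral_power_0_1]]
  by (simp add: integral_unique)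

definition fps_inv_succ :: "real fps" where "fps_inv_succ = Abs_fps (\<lambda>m. 1 / (real m + 1))"

lemma fps_nth_mult_compose:
  fixes e a c :: "'a::comm_ring_1 fps"
  assumes "fps_nth c 0 = 0"
  shows "fps_nth (e * (a oo c)) n = (\<Sum>m\<le>n. fps_nth a m * fps_nth (e * c ^ m) n)"
proof -
  have "fps_nth (e * (a oo c)) n
      = (\<Sum>i=0..n. \<Sum>m=0..n-i. fps_nth e i * fps_nth a m * fps_nth (c^m) (n-i))"
    by (simp add: fps_mult_nth fps_compose_nth sum_distrib_left mult.assoc)
  also have "\<dots> = (\<Sum>i=0..n. \<Sum>m=0..n. fps_nth e i * fps_nth a m * fps_nth (c^m) (n-i))"
    using startsby_zero_power_prefix[OF assms]
    by (intro sum.cong refl sum.mono_neutral_left) auto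
  also have "\<dots> = (\<Sum>m\<le>n. fps_nth a m * fps_nth (e * c ^ m) n)"
    by (subst sum.swap) (simp add: fps_mult_nth sum_distrib_left atMost_atLeast0 algebra_simps)
  finally show ?thesis .
qed

lemma fps_Y_mult_compose_fps_inv_succ: "fps_Y * (fps_inv_succ oo fps_Y) = fps_const 2 * fps_X"
proof -
  define D where "D = fps_deriv (fps_X * fps_inv_succ)"
  have "(1 - fps_X) * D = 1"
    by (rule fps_ext) (auto simp: D_def fps_inv_succ_def algebra_simps simp del: fps_deriv_mult)
  then have "((1 - fps_X) * D) oo fps_Y = 1"
    by simp
  then have D_compose: "(1 - fps_Y) * (D oo fps_Y) = 1"
    by (simp only: fps_compose_mult_distrib fps_compose_sub_distrib fps_compose_1
        fps_X_fps_compose_startby0 fps_Y_nth_0)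
  have "fps_deriv ((fps_X * fps_inv_succ) oo fps_Y) = (D oo fps_Y) * (2 * (1 - fps_Y))"
    by (simp only: fps_compose_deriv[OF fps_Y_nth_0] D_def fps_deriv_fps_Y)
  also have "\<dots> = 2 * ((1 - fps_Y) * (D oo fps_Y))"
    by (simp only: mult_ac)
  also have "\<dots> = fps_deriv (fps_const 2 * fps_X)"
    unfolding D_compose by (simp add: numeral_fps_const)
  finally have "(fps_X * fps_inv_succ) oo fps_Y = fps_const 2 * fps_X"
    unfolding fps_deriv_eq_iff by simp
  then show ?thesis
    by (simp add: fps_compose_mult_distrib)
qed

lemma fps_exp_minus_1_neq_0:
  assumes "c \<noteq> 0"
  shows "fps_exp c - 1 \<noteq> (0 :: 'a::field_char_0 fps)"
proof
  assume "fps_exp c - 1 = (0 :: 'a fps)"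
  then have "fps_nth (fps_exp c - 1 :: 'a fps) 1 = 0" by simp
  with assms show False by simp
qed

lemma fps_exp_minus_1_dvd_fps_X_mult:
  assumes "c \<noteq> 0"
  shows "fps_exp c - 1 dvd (fps_X * f :: 'a::field_char_0 fps)"
proof (cases "f = 0")
  case False
  have "subdegree (fps_exp c - 1 :: 'a fps) = 1"
    using assms by (intro subdegreeI) auto
  with False assms show ?thesis
    by (subst fps_dvd_iff) (simp_all add: fps_exp_minus_1_neq_0 fps_mult_fps_X_commute)
qed simp

lemma fps_exp_compose_linear: "fps_exp a oo (fps_const c * fps_X) = fps_exp (c * a :: 'a::field_char_0)"
  by (rule fps_ext) (simp add: power_mult_distrib)

lemma bernoulli_egf_compose_double:
  "(fps_X * fps_exp (1/2) / (fps_exp 1 - 1)) oo (fps_const 2 * fps_X)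
     = fps_const 2 * fps_X * fps_exp 1 / (fps_exp 2 - 1 :: real fps)"
  by (subst fps_compose_divide_distrib)
    (simp_all add: fps_exp_minus_1_dvd_fps_X_mult fps_exp_minus_1_neq_0 fps_compose_mult_distrib
      fps_compose_sub_distrib fps_exp_compose_linear)

lemma integral_Qpoly_0_1_eq_fps_nth:
  "integral {0..1} (\<lambda>u. Qpoly n u 0 1) = fact n * fps_nth (fps_exp (-1) * (fps_inv_succ oo fps_Y)) n"
proof -
  have "integral {0..1} (\<lambda>u. Qpoly n u 0 1) = (\<Sum>m\<le>n. Qcoeff n m / (real m + 1))"
    by (simp add: Qpoly_0_1_eq_sum_Qcoeff integral_0_1_polynomial)
  also have "\<dots> = fact n * (\<Sum>m\<le>n. fps_nth fps_inv_succ m * fps_nth (Qcoeff_egf m) n)"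
    by (simp add: Qcoeff_def fps_inv_succ_def sum_distrib_left)
  also have "\<dots> = fact n * fps_nth (fps_exp (-1) * (fps_inv_succ oo fps_Y)) n"
    by (simp add: fps_nth_mult_compose Qcoeff_egf_def mult.assoc)
  finally show ?thesis .
qed

lemma fps_exp_neg1_mult_compose_fps_inv_succ:
  "fps_exp (-1) * (fps_inv_succ oo fps_Y) = fps_const 2 * fps_X * fps_exp 1 / (fps_exp 2 - 1)"
proof -
  have exp_2: "fps_exp 2 * fps_exp (-2) = (1 :: real fps)"
    "fps_exp (-1) * fps_exp 2 = (fps_exp 1 :: real fps)"
    by (simp_all flip: fps_exp_add_mult)
  have "fps_exp 2 - 1 = fps_exp 2 * fps_Y"
    by (simp add: fps_Y_def algebra_simps exp_2)
  then have "fps_exp (-1) * (fps_inv_succ oo fps_Y) * (fps_exp 2 - 1)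
      = fps_exp (-1) * fps_exp 2 * (fps_Y * (fps_inv_succ oo fps_Y))"
    by (simp only: mult_ac)
  also have "\<dots> = fps_const 2 * fps_X * fps_exp 1"
    by (simp add: fps_Y_mult_compose_fps_inv_succ exp_2)
  finally show ?thesis
    by (metis fps_exp_minus_1_neq_0 nonzero_mult_div_cancel_right zero_neq_numeral)
qed

theorem theorem4:
  fixes n :: nat
  shows "integral {0..1} (\<lambda>u. Qpoly n u 0 1) = 2 ^ n * bernoulli_poly n (1/2)"
proof -
  have "integral {0..1} (\<lambda>u. Qpoly n u 0 1)
      = fact n * fps_nth (fps_exp (-1) * (fps_inv_succ oo fps_Y)) n"
    by (rule integral_Qpoly_0_1_eq_fps_nth)
  also have "\<dots>
      = fact n * fps_nth ((fps_X * fps_exp (1/2) / (fps_exp 1 - 1)) oo (fps_const 2 * fps_X)) n"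
    by (simp only: fps_exp_neg1_mult_compose_fps_inv_succ bernoulli_egf_compose_double)
  also have "\<dots> = 2 ^ n * bernoulli_poly n (1/2)"
    by (simp add: bernoulli_poly_def)
  finally show ?thesis .
qed

end
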